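(* Let $L,M,N$ be positive integers. For $n=1,\dots,N$ let $\bm{s}_n\in\mathbb{C}^L$, $\overline{\bm{h}}_n\in\mathbb{C}^M$, $\bm{R}_n\in\mathbb{C}^{M\times M}$, and set $g_n=\frac{1}{M}\operatorname{tr}(\bm{R}_n)$. Let $\bm{a}^\circ\in\{0,1\}^N$. Define $$\mathcal{N}_{\mathrm{I}}=\Big\{\bm{x}\in\mathbb{R}^N:\ \sum_{n=1}^N x_n\bm{R}_n\otimes(\bm{s}_n\bm{s}_n^H)=\bm{0}\ \text{and}\ \sum_{n=1}^N x_n\overline{\bm{h}}_n\otimes\bm{s}_n=\bm{0}\Big\},$$ $$\mathcal{N}_{\mathrm{II}}=\Big\{\bm{x}\in\mathbb{R}^N:\ \sum_{n=1}^N x_n g_n\bm{I}_M\otimes(\bm{s}_n\bm{s}_n^H)=\bm{0}\ \text{and}\ \sum_{n=1}^N x_n\overline{\bm{h}}_n\otimes\bm{s}_n=\bm{0}\Big\},$$ $$\mathcal{C}=\{\bm{x}\in\mathbb{R}^N:\ x_n\ge 0\text{ if }a^\circ_n=0,\ x_n\le 0\text{ if }a^\circ_n=1\}.$$ If $\mathcal{N}_{\mathrm{II}}\cap\mathcal{C}=\{\bm{0}\}$, then $\mathcal{N}_{\mathrm{I}}\cap\mathcal{C}=\{\bm{0}\}$.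
   Context: $\otimes$ is the Kronecker product. In the paper, $\bm{R}_n$ is the channel correlation matrix of device $n$ (correlated case) and $g_n\bm{I}_M$ its uncorrelated counterpart; $\bm{a}^\circ$ is the true activity vector. *)

theory Defs
  imports Complex_Main
begin

text \<open>Finite-dimensional complex vectors/matrices are represented as functions
  nat => complex (resp. nat => nat => complex); only entries with indices
  below the stated dimension are meaningful.\<close>

text \<open>Kronecker product of a (p x q) matrix A with an (r x s) matrix B:
  entry (i*r+k, j*s+l) equals A(i,j)*B(k,l).\<close>
definition kron_mat :: "nat \<Rightarrow> nat \<Rightarrow> (nat \<Rightarrow> nat \<Rightarrow> complex) \<Rightarrow> (nat \<Rightarrow> nat \<Rightarrow> complex)
    \<Rightarrow> nat \<Rightarrow> nat \<Rightarrow> complex" where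
  "kron_mat r s A B = (\<lambda>i j. A (i div r) (j div s) * B (i mod r) (j mod s))"

definition kron_vec :: "nat \<Rightarrow> (nat \<Rightarrow> complex) \<Rightarrow> (nat \<Rightarrow> complex) \<Rightarrow> nat \<Rightarrow> complex" where
  "kron_vec r u v = (\<lambda>i. u (i div r) * v (i mod r))"

definition outer_H :: "(nat \<Rightarrow> complex) \<Rightarrow> nat \<Rightarrow> nat \<Rightarrow> complex" where
  "outer_H s = (\<lambda>i j. s i * cnj (s j))"

definition id_mat :: "nat \<Rightarrow> nat \<Rightarrow> complex" where
  "id_mat = (\<lambda>i j. if i = j then 1 else 0)"

definition mtrace :: "nat \<Rightarrow> (nat \<Rightarrow> nat \<Rightarrow> complex) \<Rightarrow> complex" where
  "mtrace M R = (\<Sum>i<M. R i i)"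

definition zero_mat_on :: "nat \<Rightarrow> nat \<Rightarrow> (nat \<Rightarrow> nat \<Rightarrow> complex) \<Rightarrow> bool" where
  "zero_mat_on p q A \<longleftrightarrow> (\<forall>i<p. \<forall>j<q. A i j = 0)"

definition zero_vec_on :: "nat \<Rightarrow> (nat \<Rightarrow> complex) \<Rightarrow> bool" where
  "zero_vec_on p v \<longleftrightarrow> (\<forall>i<p. v i = 0)"

text \<open>Vectors x in R^N are functions nat => real supported on {0..<N}
  (index n here corresponds to n+1 in the paper).\<close>
definition realvecs :: "nat \<Rightarrow> (nat \<Rightarrow> real) set" where
  "realvecs N = {x. \<forall>n\<ge>N. x n = 0}"

definition N_I :: "nat \<Rightarrow> nat \<Rightarrow> nat \<Rightarrow> (nat \<Rightarrow> nat \<Rightarrow> complex) \<Rightarrow> (nat \<Rightarrow> nat \<Rightarrow> nat \<Rightarrow> complex)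
    \<Rightarrow> (nat \<Rightarrow> nat \<Rightarrow> complex) \<Rightarrow> (nat \<Rightarrow> real) set" where
  "N_I L M N s R h = {x \<in> realvecs N.
     zero_mat_on (M*L) (M*L) (\<lambda>i j. \<Sum>n<N. complex_of_real (x n) * kron_mat L L (R n) (outer_H (s n)) i j) \<and>
     zero_vec_on (M*L) (\<lambda>i. \<Sum>n<N. complex_of_real (x n) * kron_vec L (h n) (s n) i)}"

definition N_II :: "nat \<Rightarrow> nat \<Rightarrow> nat \<Rightarrow> (nat \<Rightarrow> nat \<Rightarrow> complex) \<Rightarrow> (nat \<Rightarrow> nat \<Rightarrow> nat \<Rightarrow> complex)
    \<Rightarrow> (nat \<Rightarrow> nat \<Rightarrow> complex) \<Rightarrow> (nat \<Rightarrow> real) set" where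
  "N_II L M N s R h = {x \<in> realvecs N.
     zero_mat_on (M*L) (M*L) (\<lambda>i j. \<Sum>n<N. complex_of_real (x n) *
        kron_mat L L (\<lambda>a b. (mtrace M (R n) / of_nat M) * id_mat a b) (outer_H (s n)) i j) \<and>
     zero_vec_on (M*L) (\<lambda>i. \<Sum>n<N. complex_of_real (x n) * kron_vec L (h n) (s n) i)}"

definition cone_C :: "nat \<Rightarrow> (nat \<Rightarrow> bool) \<Rightarrow> (nat \<Rightarrow> real) set" where
  "cone_C N a = {x \<in> realvecs N. \<forall>n<N. (\<not> a n \<longrightarrow> x n \<ge> 0) \<and> (a n \<longrightarrow> x n \<le> 0)}"

end

theory Submission
  imports Defs
begin

text \<open>Every vector in \<open>N_I\<close> lies in \<open>N_II\<close>, so \<open>N_I \<inter> C \<subseteq> N_II \<inter> C = {0}\<close>.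
  Indeed, the \<open>(p,p)\<close> diagonal block of \<open>\<Sum>n x\<^sub>n R\<^sub>n \<otimes> s\<^sub>n s\<^sub>n\<^sup>H\<close> is
  \<open>\<Sum>n x\<^sub>n (R\<^sub>n)\<^sub>p\<^sub>p s\<^sub>n s\<^sub>n\<^sup>H\<close>; summing these blocks over \<open>p\<close> (a partial trace) shows
  \<open>\<Sum>n x\<^sub>n tr(R\<^sub>n) s\<^sub>n s\<^sub>n\<^sup>H = 0\<close>, and every block of \<open>\<Sum>n x\<^sub>n g\<^sub>n I\<^sub>M \<otimes> s\<^sub>n s\<^sub>n\<^sup>H\<close> is
  either zero or a multiple of this matrix.\<close>

lemma block_index_less:
  fixes p k M L :: nat
  assumes "p < M" "k < L"
  shows "p * L + k < M * L"
proof -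
  have "p * L + k < (p + 1) * L" using assms by simp
  also have "\<dots> \<le> M * L" using assms by (intro mult_right_mono) auto
  finally show ?thesis .
qed

lemma kron_mat_block_entry:
  assumes "k < L" "l < L"
  shows "kron_mat L L A B (p * L + k) (q * L + l) = A p q * B k l"
  using assms by (simp add: kron_mat_def)

lemma sum_kron_zero_imp_trace_sum_zero:
  fixes c :: "nat \<Rightarrow> complex"
  assumes zero: "zero_mat_on (M * L) (M * L) (\<lambda>i j. \<Sum>n<N. c n * kron_mat L L (A n) (B n) i j)"
    and "k < L" "l < L"
  shows "(\<Sum>n<N. c n * mtrace M (A n) * B n k l) = 0"
proof -
  have diagonal_block: "(\<Sum>n<N. c n * A n p p * B n k l) = 0" if "p < M" for p
  proof -
    have "(\<Sum>n<N. c n * kron_mat L L (A n) (B n) (p * L + k) (p * L + l)) = 0"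
      using zero block_index_less[OF that \<open>k < L\<close>] block_index_less[OF that \<open>l < L\<close>]
      by (simp add: zero_mat_on_def)
    then show ?thesis by (simp add: kron_mat_block_entry[OF \<open>k < L\<close> \<open>l < L\<close>] mult.assoc)
  qed
  have "(\<Sum>n<N. c n * mtrace M (A n) * B n k l) = (\<Sum>p<M. \<Sum>n<N. c n * A n p p * B n k l)"
    unfolding mtrace_def
    by (subst sum.swap) (simp add: sum_distrib_left sum_distrib_right)
  also have "\<dots> = 0" using diagonal_block by simp
  finally show ?thesis .
qed

lemma sum_kron_scaled_identity_zero:
  fixes c g :: "nat \<Rightarrow> complex"
  assumes "L > 0" and zero: "\<And>k l. k < L \<Longrightarrow> l < L \<Longrightarrow> (\<Sum>n<N. c n * g n * B n k l) = 0"
  shows "zero_mat_on P P (\<lambda>i j. \<Sum>n<N. c n * kron_mat L L (\<lambda>a b. g n * id_mat a b) (B n) i j)"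
  unfolding zero_mat_on_def
proof (intro allI impI)
  fix i j
  show "(\<Sum>n<N. c n * kron_mat L L (\<lambda>a b. g n * id_mat a b) (B n) i j) = 0"
  proof (cases "i div L = j div L")
    case True
    have "(\<Sum>n<N. c n * g n * B n (i mod L) (j mod L)) = 0"
      using zero \<open>L > 0\<close> by simp
    with True show ?thesis by (simp add: kron_mat_def id_mat_def mult.assoc)
  qed (simp add: kron_mat_def id_mat_def)
qed

lemma N_I_subset_N_II:
  assumes "L > 0"
  shows "N_I L M N s R h \<subseteq> N_II L M N s R h"
proof
  fix x assume x: "x \<in> N_I L M N s R h"
  let ?c = "\<lambda>n. complex_of_real (x n)"
  have "(\<Sum>n<N. ?c n * (mtrace M (R n) / of_nat M) * outer_H (s n) k l) = 0"
    if "k < L" "l < L" for k l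
  proof -
    have "(\<Sum>n<N. ?c n * mtrace M (R n) * outer_H (s n) k l) = 0"
      using x that by (intro sum_kron_zero_imp_trace_sum_zero) (auto simp: N_I_def)
    then show ?thesis
      by (simp add: sum_divide_distrib[symmetric] mult.commute mult.left_commute)
  qed
  then have "zero_mat_on (M * L) (M * L) (\<lambda>i j. \<Sum>n<N. ?c n *
      kron_mat L L (\<lambda>a b. (mtrace M (R n) / of_nat M) * id_mat a b) (outer_H (s n)) i j)"
    using assms by (intro sum_kron_scaled_identity_zero)
  with x show "x \<in> N_II L M N s R h" by (simp add: N_I_def N_II_def)
qed

lemma zero_in_N_I: "(\<lambda>_. 0) \<in> N_I L M N s R h"
  by (simp add: N_I_def realvecs_def zero_mat_on_def zero_vec_on_def)

theorem theorem3:
  fixes L M N :: nat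
    and s :: "nat \<Rightarrow> nat \<Rightarrow> complex"
    and R :: "nat \<Rightarrow> nat \<Rightarrow> nat \<Rightarrow> complex"
    and h :: "nat \<Rightarrow> nat \<Rightarrow> complex"
    and a :: "nat \<Rightarrow> bool"
  assumes "L > 0" and "M > 0" and "N > 0"
    and "N_II L M N s R h \<inter> cone_C N a = {\<lambda>_. 0}"
  shows "N_I L M N s R h \<inter> cone_C N a = {\<lambda>_. 0}"
proof
  show "N_I L M N s R h \<inter> cone_C N a \<subseteq> {\<lambda>_. 0}"
    using N_I_subset_N_II[OF \<open>L > 0\<close>] assms(4) by blast
  have "(\<lambda>_. 0) \<in> cone_C N a" using assms(4) by blast
  then show "{\<lambda>_. 0} \<subseteq> N_I L M N s R h \<inter> cone_C N a" using zero_in_N_I by blast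
qed

end
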